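(* Assume (B1)–(B4) and consider the NL-IAPIAL method described in the context. Let $\bar d:=\mathrm{dist}(\bar z,\partial\mathcal H)$ (where $\partial\mathcal H$ is the boundary of $\mathcal H$ and $\bar z,\tau$ are from (B4)) and $$\kappa_0:=2\big[K_h+B_f^{(1)}\big]D_h+\Big[\frac{\sigma^2}{2(1-\sigma)^2}+2\Big(\frac{1+\sigma}{1-\sigma}\Big)\Big]\frac{D_h^2}{\lambda}.$$ Then: (a) for every $k\ge1$ at which $p_k$ is computed, $$\min\{1,\bar d\}\tau\|p_k\|+\frac{\|p_k\|^2}{c_k}\le\kappa_0+\frac1{c_k}\langle p_k,p_{k-1}\rangle;$$ (b) for every $k\ge0$ at which $p_k$ is defined, $$\|p_k\|\le C_0:=\frac{\max\{\|p_0\|,\kappa_0\}}{\min\{1,\bar d\}\tau}.$$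
   Context: $\mathcal K\subseteq\mathbb{R}^\ell$ is a nonempty closed convex cone, $\mathcal K^*=\{y:\langle y,x\rangle\ge0\ \forall x\in\mathcal K\}$ its dual cone, $u\preceq_{\mathcal K}v$ means $v-u\in\mathcal K$, $\Pi_S$ is the Euclidean projection onto a closed convex set $S$, $\mathrm{dist}(y,S)$ the Euclidean distance. $\partial_\varepsilon\varphi(z):=\{u:\varphi(z')\ge\varphi(z)+\langle u,z'-z\rangle-\varepsilon\ \forall z'\}$, $\partial=\partial_0$. For differentiable $g:\mathbb{R}^n\to\mathbb{R}^\ell$, $\nabla g(z)\in\mathbb{R}^{n\times\ell}$ is the transpose of the Jacobian. $g$ is $\mathcal K$-convex if $g(tz'+(1-t)z)-tg(z')-(1-t)g(z)\preceq_{\mathcal K}0$ for all $z,z'$, $t\in[0,1]$. (B1) $h:\mathbb{R}^n\to(-\infty,\infty]$ proper lsc convex, $K_h$-Lipschitz on its domain; $\mathcal H:=\mathrm{dom}\,h$ compact with diameter $D_h$. (B2) $f$ differentiable on an open set containing $\mathcal H$; $m_f,L_f>0$ with $f(z')-f(z)-\langle\nabla f(z),z'-z\rangle\ge-\frac{m_f}{2}\|z'-z\|^2$ and $\|\nabla f(z')-\nabla f(z)\|\le L_f\|z'-z\|$ on $\mathcal H$. (B3) $g$ is $\mathcal K$-convex, differentiable, $\nabla g$ is $L_g$-Lipschitz on $\mathbb{R}^n$. (B4) there exist $\bar z\in\mathrm{int}\,\mathcal H$, $\tau\in(0,1]$ with $g(\bar z)\preceq_{\mathcal K}0$ and $\max\{\|\nabla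 g(z)p\|,|\langle p,g(\bar z)\rangle|\}\ge\tau\|p\|$ for all $z\in\mathcal H$, $p\in\mathcal K^*$. Constants: $B_f^{(1)}:=\sup_{\mathcal H}\|\nabla f\|$, $B_g^{(0)}:=\sup_{\mathcal H}\|g\|$, $B_g^{(1)}:=\sup_{\mathcal H}\|\nabla g\|$. Functions: $\phi=f+h$; $\mathcal L_c(z;p):=f(z)+h(z)+\frac1{2c}[\mathrm{dist}^2(p+cg(z),-\mathcal K)-\|p\|^2]$; $\widetilde{\mathcal L}_c(z;p):=\mathcal L_c(z;p)-h(z)$, with $\nabla_z\widetilde{\mathcal L}_c(z;p)=\nabla f(z)+\nabla g(z)\Pi_{\mathcal K^*}(p+cg(z))$; $\Lambda(c,p):=L_f+L_g\|p\|+c(B_g^{(0)}L_g+[B_g^{(1)}]^2)$. NL-IAPIAL method. Inputs: $\lambda\in(0,1/(2m_f)]$, $\sigma\in(0,1/\sqrt2]$, $c_1>0$, $(z_0,p_0)\in\mathcal H\times\mathbb{R}^\ell$, $(\hat\rho,\hat\eta)\in\mathbb{R}^2_{++}$. Set $\hat k=0$, $k=1$. Iteration $k$: (1) set $L^\psi_{k-1}:=\lambda\Lambda(c_k,p_{k-1})+1$, $\sigma_{k-1}:=\sigma/\sqrt{L^\psi_{k-1}}$, and obtain (by any procedure) $(z_k,v_k,\varepsilon_k)\in\mathbb{R}^n\times\mathbb{R}^n\times\mathbb{R}_+$ with $v_k\in\partial_{\varepsilon_k}(\lambda\mathcal L_{c_k}(\cdot;p_{k-1})+\frac12\|\cdot-z_{k-1}\|^2)(z_k)$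 and $\|v_k\|^2+2\varepsilon_k\le\sigma_{k-1}^2\|v_k+z_{k-1}-z_k\|^2$. (2) Set $r_k:=v_k+z_{k-1}-z_k$, $\delta_k:=\varepsilon_k/\lambda$, $\hat z_k:=\mathrm{argmin}_u\{\lambda[\langle\nabla_z\widetilde{\mathcal L}_{c_k}(z_k;p_{k-1}),u-z_k\rangle+h(u)]-\langle r_k,u-z_k\rangle+\frac{L^\psi_{k-1}}2\|u-z_k\|^2\}$, $w_k:=\frac1\lambda[r_k+L^\psi_{k-1}(z_k-\hat z_k)]$, $\hat p_k:=\Pi_{\mathcal K^*}(p_{k-1}+c_kg(\hat z_k))$, $\hat q_k:=(p_{k-1}-\hat p_k)/c_k$, $\hat w_k:=w_k+\nabla_z\widetilde{\mathcal L}_{c_k}(\hat z_k;p_{k-1})-\nabla_z\widetilde{\mathcal L}_{c_k}(z_k;p_{k-1})$; if $\|\hat w_k\|\le\hat\rho$ and $\|\hat q_k\|\le\hat\eta$, stop. (3) $p_k:=\Pi_{\mathcal K^*}(p_{k-1}+c_kg(z_k))$. (4) If $k>\hat k+1$ and $\Delta_k:=\frac{1}{k-\hat k-1}[\mathcal L_{c_k}(z_{\hat k+1};p_{\hat k+1})-\mathcal L_{c_k}(z_k;p_k)]\le\frac{\lambda(1-\sigma^2)\hat\rho^2}{4(1+2\sigma)^2}$, set $c_{k+1}=2c_k$ and $\hat k=k$; otherwise $c_{k+1}=c_k$. (5) $k\leftarrow k+1$. *)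

theory Defs
  imports "HOL-Analysis.Analysis"
begin

definition dual_cone :: "'a::real_inner set \<Rightarrow> 'a set" where
  "dual_cone K = {y. \<forall>x\<in>K. 0 \<le> inner y x}"

definition K_convex :: "'b::real_vector set \<Rightarrow> ('a::real_vector \<Rightarrow> 'b) \<Rightarrow> bool" where
  "K_convex K g \<longleftrightarrow> (\<forall>z z' t. 0 \<le> t \<and> t \<le> 1 \<longrightarrow>
      t *\<^sub>R g z' + (1 - t) *\<^sub>R g z - g (t *\<^sub>R z' + (1 - t) *\<^sub>R z) \<in> K)"

definition aug_lag ::
  "('n::euclidean_space \<Rightarrow> real) \<Rightarrow> ('n \<Rightarrow> real) \<Rightarrow> ('n \<Rightarrow> 'l::euclidean_space) \<Rightarrow> 'l set
    \<Rightarrow> real \<Rightarrow> 'n \<Rightarrow> 'l \<Rightarrow> real" where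
  "aug_lag f h g K c z p =
     f z + h z + ((infdist (p + c *\<^sub>R g z) (uminus ` K))\<^sup>2 - (norm p)\<^sup>2) / (2 * c)"

text \<open>Gradient of the smooth part: grad f z + grad g z * Proj_{K*}(p + c g z).
  Here Dg z :: real^'l^'n is the n x l matrix grad g(z) (transpose of the Jacobian).\<close>
definition grad_Ltilde ::
  "(real^'n \<Rightarrow> real^'n) \<Rightarrow> (real^'n \<Rightarrow> real^'l^'n) \<Rightarrow> (real^'n \<Rightarrow> real^'l) \<Rightarrow> (real^'l) set
    \<Rightarrow> real \<Rightarrow> real^'n \<Rightarrow> real^'l \<Rightarrow> real^'n" where
  "grad_Ltilde gf Dg g K c z p = gf z + Dg z *v closest_point (dual_cone K) (p + c *\<^sub>R g z)"

definition Lambda_const :: "real \<Rightarrow> real \<Rightarrow> real \<Rightarrow> real \<Rightarrow> real \<Rightarrow> 'l::real_normed_vector \<Rightarrow> real" where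
  "Lambda_const Lf Lg Bg0 Bg1 c p = Lf + Lg * norm p + c * (Bg0 * Lg + Bg1\<^sup>2)"

end

theory Submission
  imports Defs
begin

(*
  At iteration k let q = \<nabla>g(z_k) p_k. The inexact proximal condition defining z_k, combined
  with a quadratic upper model of the augmented Lagrangian (whose curvature is the constant
  \<Lambda>(c_k, p_{k-1}) of the method), bounds <q, z_k - u> from above by \<kappa>_0 for every u in H.
  From below, test with u = zbar - d q/|q|, d = min{1, dbar}, which lies in H: K-convexity of g,
  feasibility of zbar, the Moreau decomposition of p_{k-1} + c_k g(z_k) along K* and -K, and the
  regularity condition (B4) give <q, z_k - u> \<ge> d \<tau> |p_k| + (|p_k|^2 - <p_k, p_{k-1}>)/c_k.
  Comparing both bounds is (a). By Cauchy-Schwarz, (a) says that |p_k| > |p_{k-1}| forces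
  d \<tau> |p_k| < \<kappa>_0, so |p_k| \<le> max {|p_{k-1}|, \<kappa>_0/(d \<tau>)} and (b) follows by induction.
*)

section \<open>Matrix-vector products\<close>

lemma inner_matrix_vector_transpose:
  fixes A :: "real^'m^'n"
  shows "inner (A *v q) d = inner q (transpose A *v d)"
  by (metis dot_lmul_matrix inner_commute transpose_matrix_vector)

lemma onorm_transpose_le:
  fixes A :: "real^'m^'n"
  shows "onorm (\<lambda>d. transpose A *v d) \<le> onorm (\<lambda>q. A *v q)"
proof (rule onorm_le)
  fix x :: "real^'n"
  let ?y = "transpose A *v x"
  have "(norm ?y)\<^sup>2 = inner (A *v ?y) x"
    by (metis inner_matrix_vector_transpose inner_commute power2_norm_eq_inner)
  also have "\<dots> \<le> onorm (\<lambda>q. A *v q) * norm ?y * norm x"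
    using norm_cauchy_schwarz[of "A *v ?y" x] onorm[OF matrix_vector_mul_bounded_linear, of A ?y]
    by (meson mult_right_mono norm_ge_zero order_trans)
  finally show "norm ?y \<le> onorm (\<lambda>q. A *v q) * norm x"
    using onorm_pos_le[OF matrix_vector_mul_bounded_linear, of A]
    by (cases "norm ?y = 0") (auto simp: power2_eq_square mult.commute mult.left_commute)
qed

lemma transpose_diff: "transpose (A - B) = transpose A - (transpose B :: 'a::ring_1^'m^'n)"
  by (simp add: transpose_def vec_eq_iff)

lemma onorm_matrix_diff_le:
  fixes A B :: "real^'m^'n"
  shows "onorm (\<lambda>q. A *v q) - onorm (\<lambda>q. B *v q) \<le> onorm (\<lambda>q. (A - B) *v q)"
proof -
  have "onorm (\<lambda>q. A *v q) = onorm (\<lambda>q. B *v q + (A - B) *v q)"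
    by (simp add: matrix_vector_mult_diff_rdistrib)
  also have "\<dots> \<le> onorm (\<lambda>q. B *v q) + onorm (\<lambda>q. (A - B) *v q)"
    by (rule onorm_triangle) simp_all
  finally show ?thesis by simp
qed

section \<open>Dual cones and the Moreau decomposition\<close>

lemma power2_norm_add: "(norm (a + b))\<^sup>2 = (norm a)\<^sup>2 + 2 * inner a b + (norm b)\<^sup>2"
  for a b :: "'a::real_inner"
  by (simp add: power2_norm_eq_inner inner_add_left inner_add_right inner_commute)

lemma closed_dual_cone: "closed (dual_cone K)"
  and convex_dual_cone: "convex (dual_cone K)"
proof -
  have "dual_cone K = (\<Inter>x\<in>K. {y. inner x y \<ge> 0})"
    by (auto simp: dual_cone_def inner_commute)
  then show "closed (dual_cone K)" "convex (dual_cone K)"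
    by (auto intro!: closed_INT convex_INT closed_halfspace_ge convex_halfspace_ge)
qed

lemma zero_in_dual_cone: "0 \<in> dual_cone K"
  by (simp add: dual_cone_def)

lemma dual_cone_add: "y \<in> dual_cone K \<Longrightarrow> y' \<in> dual_cone K \<Longrightarrow> y + y' \<in> dual_cone K"
  by (simp add: dual_cone_def inner_add_left)

lemma closest_point_dual_cone_in: "closest_point (dual_cone K) s \<in> dual_cone K"
  using closed_dual_cone zero_in_dual_cone by (blast intro: closest_point_in_set)

lemma closest_point_dual_cone_dot:
  assumes "y \<in> dual_cone K"
  shows "inner (s - closest_point (dual_cone K) s) y \<le> 0"
proof -
  let ?P = "closest_point (dual_cone K) s"
  have "inner (s - ?P) ((y + ?P) - ?P) \<le> 0"
    by (rule closest_point_dot[OF convex_dual_cone closed_dual_cone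
          dual_cone_add[OF assms closest_point_dual_cone_in]])
  then show ?thesis by simp
qed

lemma closest_point_dual_cone_orthogonal:
  "inner (closest_point (dual_cone K) s) (s - closest_point (dual_cone K) s) = 0"
proof -
  let ?P = "closest_point (dual_cone K) s"
  have "inner (s - ?P) ?P \<le> 0"
    by (rule closest_point_dual_cone_dot[OF closest_point_dual_cone_in])
  moreover have "inner (s - ?P) (0 - ?P) \<le> 0"
    by (rule closest_point_dot[OF convex_dual_cone closed_dual_cone zero_in_dual_cone])
  ultimately show ?thesis by (simp add: inner_commute)
qed

text \<open>The bipolar property of closed convex cones: by separation, a point outside \<open>K\<close>
  is cut off by an element of the dual cone.\<close>
lemma closest_point_dual_cone_minus_in:
  fixes K :: "'a::euclidean_space set"
  assumes K: "convex_cone K" "closed K"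
  shows "closest_point (dual_cone K) s - s \<in> K"
proof (rule ccontr)
  let ?w = "closest_point (dual_cone K) s - s"
  assume "?w \<notin> K"
  then obtain a b where ab: "inner a ?w < b" "\<forall>x\<in>K. b < inner a x"
    using separating_hyperplane_closed_point[OF _ K(2)] K(1)
    by (metis convex_cone_def)
  have b: "b < 0" using ab(2) K(1) by (auto simp: convex_cone_iff)
  have "a \<in> dual_cone K"
    unfolding dual_cone_def
  proof (intro CollectI ballI)
    fix x assume x: "x \<in> K"
    show "0 \<le> inner a x"
    proof (rule ccontr)
      assume neg: "\<not> 0 \<le> inner a x"
      have "(b / inner a x) *\<^sub>R x \<in> K"
        using K(1) x b neg by (simp add: convex_cone_iff divide_nonpos_neg)
      then show False using ab(2) neg by fastforce
    qed
  qed
  then have "0 \<le> inner a ?w"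
    using closest_point_dual_cone_dot[of a K s] by (simp add: inner_commute inner_diff_right)
  then show False using ab(1) b by simp
qed

lemma infdist_neg_cone_le:
  fixes K :: "'a::euclidean_space set"
  assumes "convex_cone K" "closed K"
  shows "infdist (s + w) (uminus ` K) \<le> norm (closest_point (dual_cone K) s + w)"
proof -
  let ?P = "closest_point (dual_cone K) s"
  have "s - ?P \<in> uminus ` K"
    using closest_point_dual_cone_minus_in[OF assms] by (metis image_eqI minus_diff_eq)
  from infdist_le[OF this, of "s + w"] show ?thesis
    by (simp add: dist_norm algebra_simps)
qed

lemma infdist_neg_cone_eq:
  fixes K :: "'a::euclidean_space set"
  assumes "convex_cone K" "closed K"
  shows "infdist s (uminus ` K) = norm (closest_point (dual_cone K) s)"
proof (rule antisym)
  let ?P = "closest_point (dual_cone K) s"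
  show "infdist s (uminus ` K) \<le> norm ?P"
    using infdist_neg_cone_le[OF assms, of s 0] by simp
  have ne: "uminus ` K \<noteq> {}" using assms(1) by (auto simp: convex_cone_iff)
  show "norm ?P \<le> infdist s (uminus ` K)"
    unfolding infdist_notempty[OF ne]
  proof (rule cINF_greatest[OF ne])
    fix y assume "y \<in> uminus ` K"
    then obtain x where x: "x \<in> K" "y = - x" by auto
    have "0 \<le> inner ?P x"
      using closest_point_dual_cone_in[of K s] x(1) by (simp add: dual_cone_def)
    then have "(norm ?P)\<^sup>2 \<le> (norm (?P + ((s - ?P) + x)))\<^sup>2"
      using closest_point_dual_cone_orthogonal[of K s]
      unfolding power2_norm_add[of ?P] by (simp add: inner_add_right)
    also have "?P + ((s - ?P) + x) = s - y" using x(2) by simp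
    finally show "norm ?P \<le> dist s y"
      unfolding dist_norm by (rule power2_le_imp_le) simp
  qed
qed

lemma norm_closest_point_dual_cone_le: "norm (closest_point (dual_cone K) s) \<le> norm s"
proof -
  let ?P = "closest_point (dual_cone K) s"
  have "(norm s)\<^sup>2 = (norm ?P)\<^sup>2 + 2 * inner ?P (s - ?P) + (norm (s - ?P))\<^sup>2"
    using power2_norm_add[of ?P "s - ?P"] by (simp only: add.commute[of ?P] diff_add_cancel)
  then have "(norm ?P)\<^sup>2 \<le> (norm s)\<^sup>2"
    unfolding closest_point_dual_cone_orthogonal by simp
  then show ?thesis by (rule power2_le_imp_le) simp
qed

section \<open>First-order estimates\<close>

lemma nonpos_if_le_small_multiples:
  fixes Y C :: real
  assumes "\<And>t. 0 < t \<Longrightarrow> t \<le> 1 \<Longrightarrow> Y \<le> C * t"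
  shows "Y \<le> 0"
proof (rule ccontr)
  assume Y: "\<not> Y \<le> 0"
  show False
  proof (cases "C \<le> 0")
    case True
    then show False using assms[of 1] Y by simp
  next
    case False
    define t where "t = min 1 (Y / (2 * C))"
    have t: "0 < t" "t \<le> 1" using Y False by (auto simp: t_def)
    have "C * t \<le> C * (Y / (2 * C))" using False by (intro mult_left_mono) (auto simp: t_def)
    also have "\<dots> = Y / 2" using False by simp
    finally show False using assms[OF t] Y by simp
  qed
qed

text \<open>A bound \<open>t X \<le> L t\<^sup>2 s\<^sup>2 + e\<close> along the whole segment \<open>t \<in> (0, 1]\<close> is
  evaluated at \<open>t = a / (2 L s)\<close> (or \<open>t = 1\<close> when that exceeds \<open>1\<close>).\<close>
lemma le_of_scaled_le_quadratic:
  fixes X L s e a :: real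
  assumes L: "0 < L" and s: "0 \<le> s" and e: "0 \<le> e" and a: "0 \<le> a" and ea: "e \<le> a\<^sup>2 / (2 * L)"
    and bound: "\<And>t. 0 < t \<Longrightarrow> t \<le> 1 \<Longrightarrow> t * X \<le> L * t\<^sup>2 * s\<^sup>2 + e"
  shows "X \<le> 2 * a * s + e"
proof (cases "a = 0")
  case True
  then have e0: "e = 0" using ea e by simp
  have "X \<le> 0"
  proof (rule nonpos_if_le_small_multiples)
    fix t :: real assume t: "0 < t" "t \<le> 1"
    have "t * X \<le> t * (L * s\<^sup>2 * t)"
      using bound[OF t] e0 by (simp add: power2_eq_square algebra_simps)
    then show "X \<le> L * s\<^sup>2 * t" using t by simp
  qed
  then show ?thesis using True e0 by simp
next
  case False
  then have a0: "0 < a" using a by simp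
  show ?thesis
  proof (cases "2 * L * s \<le> a")
    case True
    have "L * s\<^sup>2 = (L * s) * s" by (simp add: power2_eq_square)
    also have "\<dots> \<le> 2 * a * s" using True s a0 by (intro mult_right_mono) auto
    finally show ?thesis using bound[of 1] by simp
  next
    case False
    then have s0: "0 < s" using a0 s by (cases "s = 0") auto
    define t where "t = a / (2 * L * s)"
    have t: "0 < t" "t \<le> 1" using False a0 L s0 by (auto simp: t_def)
    have "X \<le> L * t * s\<^sup>2 + e / t"
      using bound[OF t] t by (simp add: field_simps power2_eq_square)
    moreover have "L * t * s\<^sup>2 = a * s / 2"
      using L s0 by (simp add: t_def power2_eq_square field_simps)
    moreover have "e / t \<le> a * s"
    proof -
      have "e / t = e * (2 * L * s) / a" using a0 L s0 by (simp add: t_def field_simps)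
      also have "\<dots> \<le> (a\<^sup>2 / (2 * L)) * (2 * L * s) / a"
        using ea L s0 a0 by (intro divide_right_mono mult_right_mono) auto
      also have "\<dots> = a * s" using L a0 by (simp add: power2_eq_square field_simps)
      finally show ?thesis .
    qed
    moreover have "0 \<le> a * s" using a0 s0 by simp
    ultimately show ?thesis using e by linarith
  qed
qed

lemma norm_linearization_error_le:
  fixes f :: "'a::real_normed_vector \<Rightarrow> 'b::real_normed_vector"
  assumes S: "convex S" "x \<in> S" "y \<in> S"
    and der: "\<And>z. z \<in> S \<Longrightarrow> (f has_derivative f' z) (at z within S)"
    and lip: "\<And>z. z \<in> S \<Longrightarrow> onorm (\<lambda>d. f' z d - f' x d) \<le> M * norm (z - x)"
    and M: "0 \<le> M"
  shows "norm (f y - f x - f' x (y - x)) \<le> M * (norm (y - x))\<^sup>2"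
proof -
  let ?T = "closed_segment x y"
  have T: "?T \<subseteq> S" using S by (simp add: closed_segment_subset)
  have "norm (f y - f x - f' x (y - x)) \<le> norm (y - x) * (M * norm (y - x))"
  proof (rule differentiable_bound_linearization[where S = ?T])
    fix t :: real assume "t \<in> {0..1}"
    then show "x + t *\<^sub>R (y - x) \<in> ?T"
      unfolding closed_segment_def by (auto intro!: exI[of _ t] simp: algebra_simps)
  next
    fix z assume z: "z \<in> ?T"
    show "(f has_derivative f' z) (at z within ?T)"
      using der[of z] z T by (auto intro: has_derivative_subset)
    have "onorm (f' z - f' x) = onorm (\<lambda>d. f' z d - f' x d)" by (simp add: fun_diff_def)
    also have "\<dots> \<le> M * norm (z - x)" using lip[of z] z T by auto
    also have "\<dots> \<le> M * norm (y - x)" using segment_bound1[OF z] M by (simp add: mult_left_mono)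
    finally show "onorm (f' z - f' x) \<le> M * norm (y - x)" .
  qed simp
  then show ?thesis by (simp add: power2_eq_square algebra_simps)
qed

lemma norm_linearization_error_transpose_le:
  fixes g :: "real^'n \<Rightarrow> real^'l" and Dg :: "real^'n \<Rightarrow> real^'l^'n"
  assumes der: "\<And>z. (g has_derivative (\<lambda>d. transpose (Dg z) *v d)) (at z)"
    and lip: "\<And>z z'. onorm (\<lambda>q. (Dg z' - Dg z) *v q) \<le> Lg * norm (z' - z)"
    and "0 \<le> Lg"
  shows "norm (g y - g x - transpose (Dg x) *v (y - x)) \<le> Lg * (norm (y - x))\<^sup>2"
proof (rule norm_linearization_error_le[where S = UNIV and f' = "\<lambda>z d. transpose (Dg z) *v d"])
  fix z
  have "onorm (\<lambda>d. transpose (Dg z) *v d - transpose (Dg x) *v d)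
      = onorm (\<lambda>d. transpose (Dg z - Dg x) *v d)"
    by (simp add: transpose_diff matrix_vector_mult_diff_rdistrib)
  also have "\<dots> \<le> Lg * norm (z - x)"
    using onorm_transpose_le[of "Dg z - Dg x"] lip[where z = x and z' = z] by linarith
  finally show "onorm (\<lambda>d. transpose (Dg z) *v d - transpose (Dg x) *v d) \<le> Lg * norm (z - x)" .
qed (use assms in auto)

lemma lipschitz_gradient_upper_bound:
  fixes f :: "'a::real_inner \<Rightarrow> real"
  assumes S: "convex S" "x \<in> S" "y \<in> S"
    and der: "\<forall>z\<in>S. (f has_derivative (\<lambda>d. inner (gf z) d)) (at z within S)"
    and lip: "\<forall>z\<in>S. \<forall>z'\<in>S. norm (gf z' - gf z) \<le> L * norm (z' - z)" and "0 \<le> L"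
  shows "f y - f x - inner (gf x) (y - x) \<le> L * (norm (y - x))\<^sup>2"
proof -
  have "norm (f y - f x - inner (gf x) (y - x)) \<le> L * (norm (y - x))\<^sup>2"
  proof (rule norm_linearization_error_le[OF S, where f' = "\<lambda>z d. inner (gf z) d"])
    fix z assume z: "z \<in> S"
    show "onorm (\<lambda>d. inner (gf z) d - inner (gf x) d) \<le> L * norm (z - x)"
    proof (rule onorm_bound)
      show "0 \<le> L * norm (z - x)" using \<open>0 \<le> L\<close> by simp
      fix d
      have "norm (inner (gf z) d - inner (gf x) d) \<le> norm (gf z - gf x) * norm d"
        using Cauchy_Schwarz_ineq2[of "gf z - gf x" d] by (simp add: inner_diff_left)
      also have "\<dots> \<le> L * norm (z - x) * norm d"
        using lip z S(2) by (intro mult_right_mono) auto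
      finally show "norm (inner (gf z) d - inner (gf x) d) \<le> L * norm (z - x) * norm d" .
    qed
  qed (use der \<open>0 \<le> L\<close> in auto)
  then show ?thesis by simp
qed

lemma K_convex_gradient_inequality:
  fixes g :: "'a::real_normed_vector \<Rightarrow> 'b::real_inner"
  assumes conv: "K_convex K g" and y: "y \<in> dual_cone K" and lin: "linear g'"
    and err: "\<And>z. norm (g z - g x - g' (z - x)) \<le> M * (norm (z - x))\<^sup>2"
  shows "inner y (g' (z - x)) \<le> inner y (g z) - inner y (g x)"
proof -
  let ?w = "z - x"
  have "inner y (g' ?w) - (inner y (g z) - inner y (g x)) \<le> 0"
  proof (rule nonpos_if_le_small_multiples[where C = "norm y * M * (norm ?w)\<^sup>2"])
    fix t :: real assume t: "0 < t" "t \<le> 1"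
    define xt where "xt = x + t *\<^sub>R ?w"
    have "xt = t *\<^sub>R z + (1 - t) *\<^sub>R x" by (simp add: xt_def algebra_simps)
    then have "t *\<^sub>R g z + (1 - t) *\<^sub>R g x - g xt \<in> K"
      using conv t unfolding K_convex_def by auto
    then have "0 \<le> inner y (t *\<^sub>R g z + (1 - t) *\<^sub>R g x - g xt)"
      using y by (simp add: dual_cone_def)
    then have chord: "inner y (g xt) - inner y (g x) \<le> t * (inner y (g z) - inner y (g x))"
      by (simp add: inner_diff_right inner_add_right algebra_simps)
    have "inner y (g' (t *\<^sub>R ?w)) - inner y (g xt - g x)
        \<le> norm y * norm (g xt - g x - g' (t *\<^sub>R ?w))"
      using norm_cauchy_schwarz[of y "g' (t *\<^sub>R ?w) - (g xt - g x)"]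
      by (simp add: inner_diff_right norm_minus_commute)
    also have "\<dots> \<le> norm y * (M * (t * norm ?w)\<^sup>2)"
      using err[of xt] t by (intro mult_left_mono) (auto simp: xt_def)
    finally have "inner y (g' (t *\<^sub>R ?w)) - inner y (g xt - g x) \<le> norm y * (M * (t * norm ?w)\<^sup>2)" .
    moreover have "inner y (g' (t *\<^sub>R ?w)) = t * inner y (g' ?w)"
      using linear_cmul[OF lin] by simp
    ultimately have "t * inner y (g' ?w) - (inner y (g xt) - inner y (g x)) \<le> t * (norm y * M * (norm ?w)\<^sup>2 * t)"
      by (simp add: inner_diff_right power2_eq_square algebra_simps)
    with chord have "t * (inner y (g' ?w) - (inner y (g z) - inner y (g x))) \<le> t * (norm y * M * (norm ?w)\<^sup>2 * t)"
      by (simp add: algebra_simps)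
    then show "inner y (g' ?w) - (inner y (g z) - inner y (g x)) \<le> norm y * M * (norm ?w)\<^sup>2 * t"
      using t by simp
  qed
  then show ?thesis by simp
qed

lemma le_SUP_of_lipschitz:
  fixes F :: "'a::real_normed_vector \<Rightarrow> real"
  assumes S: "bounded S" "x \<in> S" and lip: "\<forall>y\<in>S. \<forall>z\<in>S. F y - F z \<le> L * norm (y - z)"
  shows "F x \<le> (SUP y\<in>S. F y)"
proof (rule cSUP_upper[OF S(2)])
  obtain B where B: "\<forall>y\<in>S. norm y \<le> B" using S(1) by (auto simp: bounded_iff)
  have "F y \<le> F x + \<bar>L\<bar> * (B + B)" if y: "y \<in> S" for y
  proof -
    have "F y - F x \<le> \<bar>L\<bar> * norm (y - x)"
      using lip y S(2) by (meson abs_ge_self mult_right_mono norm_ge_zero order_trans)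
    also have "\<dots> \<le> \<bar>L\<bar> * (B + B)"
      using norm_triangle_ineq4[of y x] bspec[OF B y] bspec[OF B S(2)] by (intro mult_left_mono) auto
    finally show ?thesis by simp
  qed
  then show "bdd_above (F ` S)" by (intro bdd_aboveI2) auto
qed

section \<open>Inexact proximal points\<close>

lemma inexact_prox_residual_le:
  fixes v x0 x :: "'a::real_normed_vector"
  assumes tol: "(norm v)\<^sup>2 + 2 * e \<le> (sgm / sqrt L)\<^sup>2 * (norm (v + x0 - x))\<^sup>2"
    and "0 \<le> e" "1 \<le> L" "0 \<le> sgm" "sgm < 1" "norm (x0 - x) \<le> D"
  shows "norm (v + x0 - x) \<le> D / (1 - sgm)"
proof -
  let ?R = "norm (v + x0 - x)"
  have "(norm v)\<^sup>2 \<le> sgm\<^sup>2 * ?R\<^sup>2 / L"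
    using tol assms(2,3) by (simp add: power_divide)
  also have "\<dots> \<le> sgm\<^sup>2 * ?R\<^sup>2 / 1"
    using assms(3) by (intro divide_left_mono) auto
  also have "\<dots> = (sgm * ?R)\<^sup>2" by (simp add: power_mult_distrib)
  finally have "norm v \<le> sgm * ?R"
    by (rule power2_le_imp_le) (use assms(4) in simp)
  moreover have "?R \<le> norm v + norm (x0 - x)"
    by (metis add_diff_eq norm_triangle_ineq)
  ultimately have "?R * (1 - sgm) \<le> D" using assms(6) by (simp add: algebra_simps)
  then show ?thesis using assms(5) by (simp add: le_divide_eq)
qed

lemma inexact_prox_segment_bound:
  fixes H :: "'a::real_inner set"
  assumes H: "convex H" and h: "convex_on H h" and x: "x \<in> H" and u: "u \<in> H"
    and model: "\<forall>y\<in>H. F y - F x \<le> inner G (y - x) + h y - h x + M * (norm (y - x))\<^sup>2"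
    and prox: "\<forall>y\<in>H. lam * F y + (1/2) * (norm (y - x0))\<^sup>2
                 \<ge> lam * F x + (1/2) * (norm (x - x0))\<^sup>2 + inner v (y - x) - e"
    and lam: "0 < lam" and L: "lam * M + 1/2 \<le> L" and t: "0 < t" "t \<le> 1"
  shows "t * (lam * (h x - h u) + inner (lam *\<^sub>R G + (x - x0) - v) (x - u))
    \<le> L * t\<^sup>2 * (norm (x - u))\<^sup>2 + e"
proof -
  define s where "s = norm (x - u)"
  define y where "y = x + t *\<^sub>R (u - x)"
  have y_eq: "y = (1 - t) *\<^sub>R x + t *\<^sub>R u" by (simp add: y_def algebra_simps)
  have yH: "y \<in> H" using H x u t by (simp add: y_eq convex_def)
  have ny: "norm (y - x) = t * s" using t by (simp add: y_def s_def norm_minus_commute)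
  have "h y \<le> (1 - t) * h x + t * h u"
    using convex_onD[OF h, of t x u] t x u by (simp add: y_eq)
  then have "F y - F x \<le> t * inner G (u - x) + t * (h u - h x) + M * (t * s)\<^sup>2"
    using model yH ny by (force simp: y_def algebra_simps)
  then have "lam * (F y - F x) \<le> lam * (t * inner G (u - x) + t * (h u - h x) + M * (t * s)\<^sup>2)"
    using lam by (intro mult_left_mono) auto
  then have model_y: "lam * F y - lam * F x
      \<le> lam * (t * inner G (u - x)) + lam * (t * (h u - h x)) + lam * M * (t * s)\<^sup>2"
    by (simp add: algebra_simps)
  have "(norm (y - x0))\<^sup>2 = (norm (x - x0))\<^sup>2 + 2 * (t * inner (x - x0) (u - x)) + (t * s)\<^sup>2"
    using power2_norm_add[of "x - x0" "t *\<^sub>R (u - x)"] ny by (simp add: y_def algebra_simps)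
  moreover have "inner v (y - x) = t * inner v (u - x)" by (simp add: y_def)
  moreover have "lam * F y + (1/2) * (norm (y - x0))\<^sup>2
      \<ge> lam * F x + (1/2) * (norm (x - x0))\<^sup>2 + inner v (y - x) - e"
    using prox yH by blast
  ultimately have prox_y: "t * inner v (u - x) - e
      \<le> lam * F y - lam * F x + t * inner (x - x0) (u - x) + (1/2) * (t * s)\<^sup>2"
    by linarith
  have "t * (lam * (h x - h u) + inner (lam *\<^sub>R G + (x - x0) - v) (x - u))
      = t * inner v (u - x) - lam * (t * inner G (u - x)) - lam * (t * (h u - h x))
        - t * inner (x - x0) (u - x)"
    by (simp add: inner_diff_left inner_diff_right inner_add_left algebra_simps)
  with model_y prox_y have "t * (lam * (h x - h u) + inner (lam *\<^sub>R G + (x - x0) - v) (x - u))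
      \<le> lam * M * (t * s)\<^sup>2 + (1/2) * (t * s)\<^sup>2 + e"
    by linarith
  also have "\<dots> = (lam * M + 1/2) * t\<^sup>2 * s\<^sup>2 + e"
    by (simp add: power_mult_distrib algebra_simps)
  also have "\<dots> \<le> L * t\<^sup>2 * s\<^sup>2 + e" using L by (simp add: mult_right_mono)
  finally show ?thesis unfolding s_def .
qed

text \<open>Optimizing the segment bound over \<open>t\<close> turns the inexact proximal condition into an
  approximate first-order optimality condition at \<open>x\<close>.\<close>
lemma inexact_prox_linearization_bound:
  fixes H :: "'a::real_inner set"
  assumes H: "convex H" and h: "convex_on H h" "\<forall>x\<in>H. \<forall>y\<in>H. \<bar>h y - h x\<bar> \<le> Kh * norm (y - x)"
    and x: "x \<in> H" and u: "u \<in> H"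
    and model: "\<forall>y\<in>H. F y - F x \<le> inner G (y - x) + h y - h x + M * (norm (y - x))\<^sup>2"
    and prox: "\<forall>y\<in>H. lam * F y + (1/2) * (norm (y - x0))\<^sup>2
                 \<ge> lam * F x + (1/2) * (norm (x - x0))\<^sup>2 + inner v (y - x) - e"
    and tol: "(norm v)\<^sup>2 + 2 * e \<le> (sgm / sqrt L)\<^sup>2 * (norm (v + x0 - x))\<^sup>2"
    and lam: "0 < lam" and L: "lam * M + 1/2 \<le> L" "1 \<le> L" and sgm: "0 \<le> sgm" and e: "0 \<le> e"
  shows "lam * inner G (x - u)
    \<le> ((1 + 2 * sgm) * norm (v + x0 - x) + lam * Kh) * norm (x - u) + sgm\<^sup>2 * (norm (v + x0 - x))\<^sup>2 / 2"
proof -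
  define R where "R = norm (v + x0 - x)"
  define s where "s = norm (x - u)"
  define X where "X = lam * (h x - h u) + inner (lam *\<^sub>R G + (x - x0) - v) (x - u)"
  have descent: "t * X \<le> L * t\<^sup>2 * s\<^sup>2 + e" if "0 < t" "t \<le> 1" for t
    unfolding X_def s_def
    by (rule inexact_prox_segment_bound[OF H h(1) x u model prox lam L(1) that])
  have "(norm v)\<^sup>2 + 2 * e \<le> (sgm * R)\<^sup>2 / L"
    using tol L(2) by (simp add: R_def power_mult_distrib power_divide)
  then have "2 * e \<le> (sgm * R)\<^sup>2 / L"
    using zero_le_power2[of "norm v"] by linarith
  then have e_le: "e \<le> (sgm * R)\<^sup>2 / (2 * L)"
    using L(2) by (simp add: field_simps)
  have "X \<le> 2 * (sgm * R) * s + e"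
    by (rule le_of_scaled_le_quadratic[OF _ _ e _ e_le descent]) (use L sgm in \<open>auto simp: R_def s_def\<close>)
  moreover have "(sgm * R)\<^sup>2 / (2 * L) \<le> (sgm * R)\<^sup>2 / 2"
    using L(2) by (intro divide_left_mono) auto
  moreover have "lam * (h u - h x) \<le> lam * Kh * s"
  proof -
    have "h u - h x \<le> Kh * s"
      using h(2) x u unfolding s_def by (metis abs_le_D1 norm_minus_commute)
    then show ?thesis using lam by (simp add: mult.assoc mult_left_mono)
  qed
  moreover have "inner (v + x0 - x) (x - u) \<le> R * s"
    unfolding R_def s_def by (rule norm_cauchy_schwarz)
  moreover have "inner (lam *\<^sub>R G + (x - x0) - v) (x - u) = lam * inner G (x - u) - inner (v + x0 - x) (x - u)"
    by (simp add: inner_add_left inner_diff_left)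
  then have "lam * inner G (x - u) = X + lam * (h u - h x) + inner (v + x0 - x) (x - u)"
    unfolding X_def by (simp add: right_diff_distrib)
  ultimately have "lam * inner G (x - u) \<le> 2 * (sgm * R) * s + (sgm * R)\<^sup>2 / 2 + lam * Kh * s + R * s"
    using e_le by linarith
  also have "\<dots> = ((1 + 2 * sgm) * R + lam * Kh) * s + sgm\<^sup>2 * R\<^sup>2 / 2"
    by (simp add: power_mult_distrib algebra_simps)
  finally show ?thesis unfolding R_def s_def .
qed

section \<open>Bounding the multipliers\<close>

lemma cball_infdist_frontier_subset:
  fixes S :: "'a::real_normed_vector set"
  assumes "closed S" "x \<in> S"
  shows "cball x (infdist x (frontier S)) \<subseteq> S"
proof -
  have ball: "ball x (infdist x (frontier S)) \<subseteq> S"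
  proof
    fix y assume y: "y \<in> ball x (infdist x (frontier S))"
    show "y \<in> S"
    proof (rule ccontr)
      assume "y \<notin> S"
      then obtain w where w: "w \<in> closed_segment x y" "w \<in> frontier S"
        using connected_Int_frontier[of "closed_segment x y" S] assms(2) by blast
      have "infdist x (frontier S) \<le> dist x w" by (rule infdist_le[OF w(2)])
      also have "\<dots> \<le> dist x y" using segment_bound1[OF w(1)] by (simp add: dist_norm norm_minus_commute)
      finally show False using y by simp
    qed
  qed
  show ?thesis
  proof (cases "infdist x (frontier S) = 0")
    case True
    then show ?thesis using assms(2) by simp
  next
    case False
    then show ?thesis
      using closure_minimal[OF ball assms(1)] infdist_nonneg[of x "frontier S"] by simp
  qed
qed

lemma infdist_frontier_pos:
  fixes S :: "'a::euclidean_space set"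
  assumes "bounded S" "x \<in> interior S"
  shows "0 < infdist x (frontier S)"
proof (rule infdist_pos_not_in_closed)
  show "frontier S \<noteq> {}"
    using assms not_bounded_UNIV by (auto simp: frontier_eq_empty)
  show "x \<notin> frontier S" using assms(2) by (simp add: frontier_def)
qed simp

lemma pos_if_doubling_or_constant:
  fixes c :: "nat \<Rightarrow> real"
  assumes "0 < c 1" and step: "\<forall>j\<in>{1..N}. c (j + 1) = 2 * c j \<or> c (j + 1) = c j"
  shows "\<forall>k\<in>{1..N}. 0 < c k"
proof
  fix k assume "k \<in> {1..N}"
  then show "0 < c k"
  proof (induction k)
    case (Suc k)
    show ?case
    proof (cases "k = 0")
      case True
      then show ?thesis using assms(1) by simp
    next
      case False
      then have "k \<in> {1..N}" using Suc.prems by auto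
      then show ?thesis using Suc.IH step by force
    qed
  qed simp
qed

text \<open>If \<open>\<parallel>p\<^sub>k\<parallel>\<close> exceeded the bound, the inner product \<open>\<langle>p\<^sub>k, p\<^sub>k\<^sub>-\<^sub>1\<rangle>\<close> would be dominated by
  \<open>\<parallel>p\<^sub>k\<parallel>\<^sup>2\<close> and the recursion would force \<open>m \<parallel>p\<^sub>k\<parallel> < \<kappa>\<close>.\<close>
lemma norm_le_of_multiplier_recursion:
  fixes p :: "nat \<Rightarrow> 'a::real_inner" and c :: "nat \<Rightarrow> real"
  assumes m: "0 < m" "m \<le> 1" and c: "\<forall>k\<in>{1..N}. 0 < c k"
    and rec: "\<forall>k\<in>{1..N}. m * norm (p k) + (norm (p k))\<^sup>2 / c k \<le> kappa + (1 / c k) * inner (p k) (p (k - 1))"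
  shows "\<forall>k\<le>N. norm (p k) \<le> max (norm (p 0)) kappa / m"
proof (intro allI impI)
  define C where "C = max (norm (p 0)) kappa / m"
  have "0 \<le> max (norm (p 0)) kappa" by (simp add: le_max_iff_disj)
  then have C: "0 \<le> C" "kappa \<le> m * C" using m by (simp_all add: C_def)
  fix k assume "k \<le> N"
  then show "norm (p k) \<le> C"
  proof (induction k)
    case 0
    have "norm (p 0) * m \<le> max (norm (p 0)) kappa"
      using mult_left_le[OF m(2) norm_ge_zero[of "p 0"]] by (simp add: le_max_iff_disj)
    then show ?case using m by (simp add: C_def le_divide_eq)
  next
    case (Suc k)
    let ?a = "norm (p (Suc k))" and ?c = "c (Suc k)"
    have k: "Suc k \<in> {1..N}" using Suc.prems by simp
    have ck: "0 < ?c" using c k by blast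
    have "inner (p (Suc k)) (p k) \<le> ?a * norm (p k)" by (rule norm_cauchy_schwarz)
    also have "\<dots> \<le> ?a * C" using Suc by (intro mult_left_mono) auto
    finally have "(1 / ?c) * inner (p (Suc k)) (p k) \<le> ?a * C / ?c"
      using ck by (simp add: divide_right_mono)
    moreover have "m * ?a + ?a\<^sup>2 / ?c \<le> kappa + (1 / ?c) * inner (p (Suc k)) (p k)"
      using bspec[OF rec k] by simp
    ultimately have "m * ?a + ?a\<^sup>2 / ?c \<le> kappa + ?a * C / ?c" by linarith
    show ?case
    proof (rule ccontr)
      assume "\<not> ?a \<le> C"
      then have "?a * C < ?a * ?a" using C(1) by (intro mult_strict_left_mono) auto
      then have "?a * C / ?c < ?a\<^sup>2 / ?c"
        using ck by (simp add: power2_eq_square divide_strict_right_mono)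
      then have "m * ?a < m * C" using \<open>m * ?a + ?a\<^sup>2 / ?c \<le> kappa + ?a * C / ?c\<close> C(2) by linarith
      then show False using \<open>\<not> ?a \<le> C\<close> m by simp
    qed
  qed
qed

text \<open>(B1)--(B3) in the quantitative form used at each iteration; \<open>Bf\<close>, \<open>Bg0\<close>, \<open>Bg1\<close> and \<open>D\<close>
  stand for \<open>B\<^sub>f\<^sup>(\<^sup>1\<^sup>)\<close>, \<open>B\<^sub>g\<^sup>(\<^sup>0\<^sup>)\<close>, \<open>B\<^sub>g\<^sup>(\<^sup>1\<^sup>)\<close> and \<open>D\<^sub>h\<close>.\<close>
locale iapial_problem =
  fixes K :: "(real^'l) set" and H :: "(real^'n) set"
    and h f :: "real^'n \<Rightarrow> real" and gf :: "real^'n \<Rightarrow> real^'n"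
    and g :: "real^'n \<Rightarrow> real^'l" and Dg :: "real^'n \<Rightarrow> real^'l^'n"
    and Kh Lf Lg Bf Bg0 Bg1 D :: real
  assumes cone: "convex_cone K" and cone_closed: "closed K"
    and H_convex: "convex H"
    and h_convex: "convex_on H h"
    and h_lipschitz: "\<forall>x\<in>H. \<forall>y\<in>H. \<bar>h y - h x\<bar> \<le> Kh * norm (y - x)"
    and f_upper: "\<forall>x\<in>H. \<forall>y\<in>H. f y - f x - inner (gf x) (y - x) \<le> Lf * (norm (y - x))\<^sup>2"
    and gf_bound: "\<forall>x\<in>H. norm (gf x) \<le> Bf"
    and g_K_convex: "K_convex K g"
    and g_linearization: "\<forall>x y. norm (g y - g x - transpose (Dg x) *v (y - x)) \<le> Lg * (norm (y - x))\<^sup>2"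
    and g_lipschitz: "\<forall>x\<in>H. \<forall>y\<in>H. norm (g y - g x) \<le> Bg1 * norm (y - x)"
    and g_bound: "\<forall>x\<in>H. norm (g x) \<le> Bg0"
    and H_diameter: "\<forall>x\<in>H. \<forall>y\<in>H. norm (x - y) \<le> D"
    and Kh_nonneg: "0 \<le> Kh" and Lf_nonneg: "0 \<le> Lf" and Lg_nonneg: "0 \<le> Lg" and Bf_nonneg: "0 \<le> Bf"
begin

text \<open>The penalty term is bounded using the Moreau decomposition of \<open>p + c g(x)\<close>.\<close>
lemma penalty_upper_model:
  fixes p :: "real^'l"
  assumes c: "0 < c" and x: "x \<in> H" and y: "y \<in> H"
  defines "q \<equiv> closest_point (dual_cone K) (p + c *\<^sub>R g x)"
  shows "((infdist (p + c *\<^sub>R g y) (uminus ` K))\<^sup>2 - (infdist (p + c *\<^sub>R g x) (uminus ` K))\<^sup>2) / (2 * c)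
    \<le> inner (Dg x *v q) (y - x) + (Lg * norm q + c * Bg1\<^sup>2 / 2) * (norm (y - x))\<^sup>2"
proof -
  let ?\<delta> = "g y - g x" and ?n = "norm (y - x)"
  have dist_x: "infdist (p + c *\<^sub>R g x) (uminus ` K) = norm q"
    unfolding q_def by (rule infdist_neg_cone_eq[OF cone cone_closed])
  have "infdist (p + c *\<^sub>R g y) (uminus ` K) \<le> norm (q + c *\<^sub>R ?\<delta>)"
    using infdist_neg_cone_le[OF cone cone_closed, of "p + c *\<^sub>R g x" "c *\<^sub>R ?\<delta>"]
    by (simp add: q_def algebra_simps)
  then have "(infdist (p + c *\<^sub>R g y) (uminus ` K))\<^sup>2 \<le> (norm (q + c *\<^sub>R ?\<delta>))\<^sup>2"
    by (rule power_mono) (simp add: infdist_nonneg)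
  also have "\<dots> = (norm q)\<^sup>2 + 2 * c * inner q ?\<delta> + c\<^sup>2 * (norm ?\<delta>)\<^sup>2"
    using c by (simp add: power2_norm_add power_mult_distrib)
  finally have dist_y: "(infdist (p + c *\<^sub>R g y) (uminus ` K))\<^sup>2
      \<le> (norm q)\<^sup>2 + 2 * c * inner q ?\<delta> + c\<^sup>2 * (norm ?\<delta>)\<^sup>2" .
  have "inner q ?\<delta> - inner (Dg x *v q) (y - x) = inner q (?\<delta> - transpose (Dg x) *v (y - x))"
    by (simp only: inner_diff_right[of q ?\<delta>] inner_matrix_vector_transpose)
  also have "\<dots> \<le> norm q * norm (?\<delta> - transpose (Dg x) *v (y - x))"
    by (rule norm_cauchy_schwarz)
  also have "\<dots> \<le> norm q * (Lg * ?n\<^sup>2)"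
    using g_linearization by (intro mult_left_mono) auto
  finally have lin: "inner q ?\<delta> \<le> inner (Dg x *v q) (y - x) + Lg * norm q * ?n\<^sup>2"
    by (simp add: algebra_simps)
  have "norm ?\<delta> \<le> Bg1 * ?n" using g_lipschitz x y by blast
  then have lip: "(norm ?\<delta>)\<^sup>2 \<le> Bg1\<^sup>2 * ?n\<^sup>2"
    by (metis norm_ge_zero power_mono power_mult_distrib)
  have "(infdist (p + c *\<^sub>R g y) (uminus ` K))\<^sup>2 - (infdist (p + c *\<^sub>R g x) (uminus ` K))\<^sup>2
      \<le> 2 * c * (inner (Dg x *v q) (y - x) + Lg * norm q * ?n\<^sup>2) + c\<^sup>2 * (Bg1\<^sup>2 * ?n\<^sup>2)"
    using dist_y dist_x lin lip c
    by (smt (verit) mult_left_mono zero_le_power2)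
  then show ?thesis using c by (simp add: field_simps power2_eq_square)
qed

lemma aug_lag_upper_model:
  fixes p :: "real^'l"
  assumes c: "0 < c" and x: "x \<in> H" and y: "y \<in> H"
  defines "q \<equiv> closest_point (dual_cone K) (p + c *\<^sub>R g x)"
  shows "aug_lag f h g K c y p - aug_lag f h g K c x p
    \<le> inner (gf x + Dg x *v q) (y - x) + h y - h x
       + (Lf + Lg * norm q + c * Bg1\<^sup>2 / 2) * (norm (y - x))\<^sup>2"
proof -
  let ?n = "norm (y - x)"
  have "aug_lag f h g K c y p - aug_lag f h g K c x p = (f y - f x) + (h y - h x)
      + ((infdist (p + c *\<^sub>R g y) (uminus ` K))\<^sup>2 - (infdist (p + c *\<^sub>R g x) (uminus ` K))\<^sup>2) / (2 * c)"
    unfolding aug_lag_def by (simp add: diff_divide_distrib)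
  moreover have "f y - f x \<le> inner (gf x) (y - x) + Lf * ?n\<^sup>2"
    using f_upper x y by fastforce
  moreover note penalty_upper_model[OF c x y, of p, folded q_def]
  moreover have "inner (gf x + Dg x *v q) (y - x) = inner (gf x) (y - x) + inner (Dg x *v q) (y - x)"
    by (simp add: inner_add_left)
  moreover have "(Lf + Lg * norm q + c * Bg1\<^sup>2 / 2) * ?n\<^sup>2 = Lf * ?n\<^sup>2 + (Lg * norm q + c * Bg1\<^sup>2 / 2) * ?n\<^sup>2"
    by (simp add: algebra_simps)
  ultimately show ?thesis by linarith
qed

lemma diameter_nonneg: "x \<in> H \<Longrightarrow> 0 \<le> D"
  using H_diameter by fastforce

lemma norm_closest_point_le:
  fixes p :: "real^'l"
  assumes "0 < c" "x \<in> H"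
  shows "norm (closest_point (dual_cone K) (p + c *\<^sub>R g x)) \<le> norm p + c * Bg0"
proof -
  have "norm (closest_point (dual_cone K) (p + c *\<^sub>R g x)) \<le> norm (p + c *\<^sub>R g x)"
    by (rule norm_closest_point_dual_cone_le)
  also have "\<dots> \<le> norm p + c * norm (g x)"
    using norm_triangle_ineq[of p "c *\<^sub>R g x"] assms(1) by simp
  also have "\<dots> \<le> norm p + c * Bg0"
    using g_bound assms by (simp add: mult_left_mono)
  finally show ?thesis .
qed

lemma multiplier_gradient_upper_bound:
  fixes p :: "real^'l"
  assumes lam: "0 < lam" and sgm: "0 \<le> sgm" "sgm < 1" and c: "0 < c" and e: "0 \<le> e"
    and x: "x \<in> H" and x0: "x0 \<in> H" and u: "u \<in> H"
    and prox: "\<forall>y\<in>H. lam * aug_lag f h g K c y p + (1/2) * (norm (y - x0))\<^sup>2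
                 \<ge> lam * aug_lag f h g K c x p + (1/2) * (norm (x - x0))\<^sup>2 + inner v (y - x) - e"
    and tol: "(norm v)\<^sup>2 + 2 * e \<le> (sgm / sqrt L)\<^sup>2 * (norm (v + x0 - x))\<^sup>2"
    and L: "lam * (Lf + Lg * (norm p + c * Bg0) + c * Bg1\<^sup>2 / 2) + 1/2 \<le> L" "1 \<le> L"
  defines "q \<equiv> closest_point (dual_cone K) (p + c *\<^sub>R g x)"
  shows "inner (Dg x *v q) (x - u)
    \<le> (Kh + Bf) * D + ((1 + 2 * sgm) / (1 - sgm) + sgm\<^sup>2 / (2 * (1 - sgm)\<^sup>2)) * D\<^sup>2 / lam"
proof -
  define R where "R = norm (v + x0 - x)"
  define s where "s = norm (x - u)"
  have "Lg * norm q \<le> Lg * (norm p + c * Bg0)"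
    unfolding q_def using norm_closest_point_le[OF c x] Lg_nonneg by (rule mult_left_mono)
  then have "lam * (Lf + Lg * norm q + c * Bg1\<^sup>2 / 2) \<le> lam * (Lf + Lg * (norm p + c * Bg0) + c * Bg1\<^sup>2 / 2)"
    using lam by (intro mult_left_mono) auto
  then have M: "lam * (Lf + Lg * norm q + c * Bg1\<^sup>2 / 2) + 1/2 \<le> L" using L(1) by linarith
  have "lam * inner (gf x + Dg x *v q) (x - u) \<le> ((1 + 2 * sgm) * R + lam * Kh) * s + sgm\<^sup>2 * R\<^sup>2 / 2"
    unfolding R_def s_def
    by (rule inexact_prox_linearization_bound[where F = "\<lambda>y. aug_lag f h g K c y p",
          OF H_convex h_convex h_lipschitz x u _ prox tol lam M L(2) sgm(1) e])
      (use aug_lag_upper_model[OF c x] in \<open>simp add: q_def\<close>)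
  moreover have "- inner (gf x) (x - u) \<le> Bf * s"
  proof -
    have "- inner (gf x) (x - u) \<le> norm (gf x) * s"
      using norm_cauchy_schwarz[of "gf x" "u - x"] by (simp add: s_def inner_diff_right norm_minus_commute)
    also have "\<dots> \<le> Bf * s" using gf_bound x by (simp add: s_def mult_right_mono)
    finally show ?thesis .
  qed
  ultimately have "lam * inner (Dg x *v q) (x - u) \<le> ((1 + 2 * sgm) * R + lam * (Kh + Bf)) * s + sgm\<^sup>2 * R\<^sup>2 / 2"
    using lam mult_left_mono[of "- inner (gf x) (x - u)" "Bf * s" lam]
    by (simp add: inner_add_left algebra_simps)
  also have "\<dots> \<le> ((1 + 2 * sgm) * (D / (1 - sgm)) + lam * (Kh + Bf)) * D + sgm\<^sup>2 * (D / (1 - sgm))\<^sup>2 / 2"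
  proof -
    have "R \<le> D / (1 - sgm)"
      unfolding R_def using H_diameter x0 x by (intro inexact_prox_residual_le[OF tol e L(2) sgm]) auto
    moreover have "s \<le> D" using H_diameter x u by (simp add: s_def)
    ultimately show ?thesis
      using sgm lam Kh_nonneg Bf_nonneg diameter_nonneg[OF x]
      by (intro add_mono mult_mono divide_right_mono power_mono mult_left_mono) (auto simp: R_def s_def)
  qed
  also have "\<dots> = lam * ((Kh + Bf) * D + ((1 + 2 * sgm) / (1 - sgm) + sgm\<^sup>2 / (2 * (1 - sgm)\<^sup>2)) * D\<^sup>2 / lam)"
    using lam sgm by (simp add: field_simps power2_eq_square)
  finally show ?thesis using lam by simp
qed

text \<open>The test point \<open>u\<close> moves from \<open>z\<close> against \<open>\<nabla>g(x) q\<close>; then \<open>K\<close>-convexity of \<open>g\<close>,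
  feasibility of \<open>z\<close> and the regularity condition (B4) each contribute one term.\<close>
lemma multiplier_gradient_lower_bound:
  fixes p :: "real^'l"
  assumes feasible: "- g z \<in> K"
    and regular: "\<forall>y\<in>H. \<forall>q\<in>dual_cone K. max (norm (Dg y *v q)) \<bar>inner q (g z)\<bar> \<ge> tau * norm q"
    and ball: "cball z d \<subseteq> H" "0 \<le> d" "d \<le> 1" and c: "0 < c" and x: "x \<in> H"
  defines "q \<equiv> closest_point (dual_cone K) (p + c *\<^sub>R g x)"
  shows "\<exists>u\<in>H. d * tau * norm q + ((norm q)\<^sup>2 - inner q p) / c \<le> inner (Dg x *v q) (x - u)"
proof
  let ?y = "Dg x *v q" and ?a = "\<bar>inner q (g z)\<bar>"
  define u where "u = z - d *\<^sub>R sgn ?y"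
  show "u \<in> H"
    using ball by (intro subsetD[OF ball(1)]) (simp add: u_def dist_norm norm_sgn)
  have q_dual: "q \<in> dual_cone K"
    unfolding q_def by (rule closest_point_dual_cone_in)
  have "inner q (transpose (Dg x) *v (z - x)) \<le> inner q (g z) - inner q (g x)"
    by (rule K_convex_gradient_inequality[where g' = "\<lambda>d. transpose (Dg x) *v d",
          OF g_K_convex q_dual matrix_vector_mul_linear])
      (use g_linearization in blast)
  moreover have "inner ?y (x - z) = - inner q (transpose (Dg x) *v (z - x))"
    using inner_matrix_vector_transpose[of "Dg x" q "z - x"] by (metis inner_minus_right minus_diff_eq)
  ultimately have grad: "inner q (g x) - inner q (g z) \<le> inner ?y (x - z)"
    by linarith
  have "0 \<le> inner q (- g z)" using q_dual feasible unfolding dual_cone_def by blast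
  then have g_z: "inner q (g z) = - ?a" by simp
  have "inner q (p + c *\<^sub>R g x - q) = 0"
    using closest_point_dual_cone_orthogonal[of K "p + c *\<^sub>R g x"] by (simp add: q_def)
  then have g_x: "inner q (g x) = ((norm q)\<^sup>2 - inner q p) / c"
    using c by (simp add: inner_diff_right inner_add_right power2_norm_eq_inner field_simps)
  have "d * (tau * norm q) \<le> d * max (norm ?y) ?a"
    using regular x q_dual ball(2) by (intro mult_left_mono) auto
  also have "\<dots> \<le> d * (norm ?y + ?a)"
    using ball(2) by (intro mult_left_mono) auto
  also have "\<dots> \<le> d * norm ?y + ?a"
    using ball(2,3) mult_left_le_one_le[of ?a d] by (simp add: distrib_left)
  finally have reg: "d * tau * norm q \<le> d * norm ?y + ?a" by (simp add: mult.assoc)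
  have "inner ?y (sgn ?y) = norm ?y"
    by (cases "?y = 0") (simp_all add: sgn_div_norm power2_norm_eq_inner[symmetric] power2_eq_square)
  then have "inner ?y (x - u) = inner ?y (x - z) + d * norm ?y"
    by (simp add: u_def inner_diff_right)
  then show "d * tau * norm q + ((norm q)\<^sup>2 - inner q p) / c \<le> inner ?y (x - u)"
    using grad g_z g_x reg by linarith
qed

lemma multiplier_recursion_step:
  fixes p :: "real^'l"
  assumes lam: "0 < lam" and sgm: "0 \<le> sgm" "sgm < 1" and c: "0 < c" and e: "0 \<le> e"
    and x: "x \<in> H" and x0: "x0 \<in> H"
    and prox: "\<forall>y\<in>H. lam * aug_lag f h g K c y p + (1/2) * (norm (y - x0))\<^sup>2
                 \<ge> lam * aug_lag f h g K c x p + (1/2) * (norm (x - x0))\<^sup>2 + inner v (y - x) - e"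
    and tol: "(norm v)\<^sup>2 + 2 * e
      \<le> (sgm / sqrt (lam * Lambda_const Lf Lg Bg0 Bg1 c p + 1))\<^sup>2 * (norm (v + x0 - x))\<^sup>2"
    and feasible: "- g z \<in> K"
    and regular: "\<forall>y\<in>H. \<forall>q\<in>dual_cone K. max (norm (Dg y *v q)) \<bar>inner q (g z)\<bar> \<ge> tau * norm q"
    and ball: "cball z d \<subseteq> H" "0 \<le> d" "d \<le> 1"
  defines "q \<equiv> closest_point (dual_cone K) (p + c *\<^sub>R g x)"
  shows "d * tau * norm q + (norm q)\<^sup>2 / c
    \<le> 2 * (Kh + Bf) * D + (sgm\<^sup>2 / (2 * (1 - sgm)\<^sup>2) + 2 * ((1 + sgm) / (1 - sgm))) * D\<^sup>2 / lam
       + (1 / c) * inner q p"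
proof -
  define L where "L = lam * Lambda_const Lf Lg Bg0 Bg1 c p + 1"
  have "0 \<le> Bg0" using g_bound x by (meson norm_ge_zero order_trans)
  then have Lambda: "Lf + Lg * (norm p + c * Bg0) + c * Bg1\<^sup>2 / 2 \<le> Lambda_const Lf Lg Bg0 Bg1 c p"
    "0 \<le> Lambda_const Lf Lg Bg0 Bg1 c p"
    using c Lf_nonneg Lg_nonneg by (simp_all add: Lambda_const_def algebra_simps)
  have L: "lam * (Lf + Lg * (norm p + c * Bg0) + c * Bg1\<^sup>2 / 2) + 1/2 \<le> L" "1 \<le> L"
    using mult_left_mono[OF Lambda(1), of lam] mult_nonneg_nonneg[OF _ Lambda(2), of lam] lam
    unfolding L_def by linarith+
  obtain u where u: "u \<in> H"
    and lower: "d * tau * norm q + ((norm q)\<^sup>2 - inner q p) / c \<le> inner (Dg x *v q) (x - u)"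
    using multiplier_gradient_lower_bound[OF feasible regular ball c x] unfolding q_def by blast
  have upper: "inner (Dg x *v q) (x - u)
      \<le> (Kh + Bf) * D + ((1 + 2 * sgm) / (1 - sgm) + sgm\<^sup>2 / (2 * (1 - sgm)\<^sup>2)) * D\<^sup>2 / lam"
    unfolding q_def
    by (rule multiplier_gradient_upper_bound[OF lam sgm c e x x0 u prox tol[folded L_def] L])
  have "(Kh + Bf) * D \<le> 2 * (Kh + Bf) * D"
    using mult_nonneg_nonneg[of "Kh + Bf" D] Kh_nonneg Bf_nonneg diameter_nonneg[OF x]
    by (subst mult.assoc) linarith
  moreover have "((1 + 2 * sgm) / (1 - sgm) + sgm\<^sup>2 / (2 * (1 - sgm)\<^sup>2)) * D\<^sup>2 / lam
      \<le> (sgm\<^sup>2 / (2 * (1 - sgm)\<^sup>2) + 2 * ((1 + sgm) / (1 - sgm))) * D\<^sup>2 / lam"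
    using sgm lam by (intro divide_right_mono mult_right_mono) (auto simp: divide_le_eq field_simps)
  moreover have "((norm q)\<^sup>2 - inner q p) / c = (norm q)\<^sup>2 / c - (1 / c) * inner q p"
    by (simp add: diff_divide_distrib)
  ultimately show ?thesis using lower upper by linarith
qed

end

text \<open>An interior point supplies two distinct points of \<open>H\<close>, which forces the Lipschitz
  constants \<open>Kh\<close> and \<open>Lg\<close> to be nonnegative.\<close>
lemma iapial_problemI:
  fixes K :: "(real^'l) set" and H :: "(real^'n) set"
    and h f :: "real^'n \<Rightarrow> real" and gf :: "real^'n \<Rightarrow> real^'n"
    and g :: "real^'n \<Rightarrow> real^'l" and Dg :: "real^'n \<Rightarrow> real^'l^'n"
  assumes K: "convex_cone K" "closed K"
    and H: "compact H" "convex H" "z \<in> interior H"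
    and h: "convex_on H h" "\<forall>z\<in>H. \<forall>z'\<in>H. \<bar>h z' - h z\<bar> \<le> Kh * norm (z' - z)"
    and U: "open U" "H \<subseteq> U"
    and f_der: "\<forall>z\<in>U. (f has_derivative (\<lambda>d. inner (gf z) d)) (at z)"
    and Lf: "0 < Lf" and gf_lip: "\<forall>z\<in>H. \<forall>z'\<in>H. norm (gf z' - gf z) \<le> Lf * norm (z' - z)"
    and g_conv: "K_convex K g" and g_der: "\<forall>z. (g has_derivative (\<lambda>d. transpose (Dg z) *v d)) (at z)"
    and Dg_lip: "\<forall>z z'. onorm (\<lambda>q. (Dg z' - Dg z) *v q) \<le> Lg * norm (z' - z)"
  shows "iapial_problem K H h f gf g Dg Kh Lf Lg
    (SUP z\<in>H. norm (gf z)) (SUP z\<in>H. norm (g z)) (SUP z\<in>H. onorm (\<lambda>q. Dg z *v q)) (diameter H)"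
proof -
  let ?Bg1 = "SUP z\<in>H. onorm (\<lambda>q. Dg z *v q)"
  have bdd: "bounded H" using H(1) by (rule compact_imp_bounded)
  have zH: "z \<in> H" using H(3) interior_subset by blast
  obtain z' where z': "z' \<in> H" "z' \<noteq> z"
    using islimptE[OF islimpt_UNIV H(3) open_interior] interior_subset by blast
  have "0 \<le> Kh * norm (z' - z)" using h(2) z' zH by (meson abs_ge_zero order_trans)
  then have Kh: "0 \<le> Kh" using z' by (simp add: zero_le_mult_iff)
  have "0 \<le> Lg * norm (z' - z)" using Dg_lip onorm_pos_le[of "\<lambda>q. (Dg z' - Dg z) *v q"]
    by (meson matrix_vector_mul_bounded_linear order_trans)
  then have Lg: "0 \<le> Lg" using z' by (simp add: zero_le_mult_iff)
  have Dg_bound: "onorm (\<lambda>d. transpose (Dg x) *v d) \<le> ?Bg1" if "x \<in> H" for x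
    using onorm_transpose_le[of "Dg x"] le_SUP_of_lipschitz[OF bdd that, of "\<lambda>z. onorm (\<lambda>q. Dg z *v q)" Lg]
      onorm_matrix_diff_le Dg_lip
    by (meson order_trans)
  have g_lip: "\<forall>x\<in>H. \<forall>y\<in>H. norm (g y - g x) \<le> ?Bg1 * norm (y - x)"
    using differentiable_bound[OF H(2), where f' = "\<lambda>z d. transpose (Dg z) *v d"] g_der Dg_bound
    by (metis has_derivative_at_withinI)
  show ?thesis
  proof
    show "\<forall>x\<in>H. \<forall>y\<in>H. f y - f x - inner (gf x) (y - x) \<le> Lf * (norm (y - x))\<^sup>2"
      using lipschitz_gradient_upper_bound[OF H(2) _ _ _ gf_lip] f_der U(2) Lf
      by (meson has_derivative_at_withinI less_imp_le subsetD)
    show "\<forall>x\<in>H. norm (gf x) \<le> (SUP z\<in>H. norm (gf z))"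
      using le_SUP_of_lipschitz[OF bdd, of _ "\<lambda>z. norm (gf z)" Lf] gf_lip
      by (meson norm_triangle_ineq2 order_trans)
    then show "0 \<le> (SUP z\<in>H. norm (gf z))"
      using zH by (meson norm_ge_zero order_trans)
    show "\<forall>x y. norm (g y - g x - transpose (Dg x) *v (y - x)) \<le> Lg * (norm (y - x))\<^sup>2"
      using norm_linearization_error_transpose_le[OF _ _ Lg] g_der Dg_lip by blast
    show "\<forall>x\<in>H. norm (g x) \<le> (SUP z\<in>H. norm (g z))"
      using le_SUP_of_lipschitz[OF bdd, of _ "\<lambda>z. norm (g z)" ?Bg1] g_lip
      by (meson norm_triangle_ineq2 order_trans)
    show "\<forall>x\<in>H. \<forall>y\<in>H. norm (x - y) \<le> diameter H"
      using diameter_bounded_bound[OF bdd] by (simp add: dist_norm)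
  qed (use K H h Kh Lf Lg g_conv g_lip in auto)
qed

theorem proposition4p4:
  fixes K :: "(real^'l) set"
    and H :: "(real^'n) set"
    and h :: "real^'n \<Rightarrow> real"
    and f :: "real^'n \<Rightarrow> real" and gf :: "real^'n \<Rightarrow> real^'n" and U :: "(real^'n) set"
    and g :: "real^'n \<Rightarrow> real^'l" and Dg :: "real^'n \<Rightarrow> real^'l^'n"
    and Kh mf Lf Lg tau :: real and zbar :: "real^'n"
    and lam sgm c1 rho eta :: real and N :: nat
    and z v zhat :: "nat \<Rightarrow> real^'n" and eps c :: "nat \<Rightarrow> real"
    and p :: "nat \<Rightarrow> real^'l" and khat :: "nat \<Rightarrow> nat"
  defines "Kstar \<equiv> dual_cone K"
    and "Dh \<equiv> diameter H"
    and "Bf1 \<equiv> Sup ((\<lambda>z. norm (gf z)) ` H)"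
    and "Bg0 \<equiv> Sup ((\<lambda>z. norm (g z)) ` H)"
    and "Bg1 \<equiv> Sup ((\<lambda>z. onorm (\<lambda>q. Dg z *v q)) ` H)"
  assumes
    \<comment> \<open>standing assumptions on the cone\<close>
    K_cone: "convex_cone K" and K_closed: "closed K"
    \<comment> \<open>(B1): h proper lsc convex, K_h-Lipschitz on its domain H, H compact (h = +infinity outside H)\<close>
    and B1_H: "compact H" "convex H" "H \<noteq> {}"
    and B1_h: "convex_on H h"
    and B1_lip: "\<forall>z\<in>H. \<forall>z'\<in>H. \<bar>h z' - h z\<bar> \<le> Kh * norm (z' - z)"
    \<comment> \<open>(B2)\<close>
    and B2_U: "open U" "H \<subseteq> U"
    and B2_diff: "\<forall>z\<in>U. (f has_derivative (\<lambda>d. inner (gf z) d)) (at z)"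
    and B2_const: "mf > 0" "Lf > 0"
    and B2_weak: "\<forall>z\<in>H. \<forall>z'\<in>H. f z' - f z - inner (gf z) (z' - z) \<ge> - (mf / 2) * (norm (z' - z))\<^sup>2"
    and B2_lip: "\<forall>z\<in>H. \<forall>z'\<in>H. norm (gf z' - gf z) \<le> Lf * norm (z' - z)"
    \<comment> \<open>(B3)\<close>
    and B3_conv: "K_convex K g"
    and B3_diff: "\<forall>z. (g has_derivative (\<lambda>d. transpose (Dg z) *v d)) (at z)"
    and B3_lip: "\<forall>z z'. onorm (\<lambda>q. (Dg z' - Dg z) *v q) \<le> Lg * norm (z' - z)"
    \<comment> \<open>(B4)\<close>
    and B4: "zbar \<in> interior H" "0 < tau" "tau \<le> 1" "- g zbar \<in> K"
    and B4_reg: "\<forall>z\<in>H. \<forall>q\<in>Kstar. max (norm (Dg z *v q)) \<bar>inner q (g zbar)\<bar> \<ge> tau * norm q"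
    \<comment> \<open>inputs of NL-IAPIAL\<close>
    and inp: "0 < lam" "lam \<le> 1 / (2 * mf)" "0 < sgm" "sgm \<le> 1 / sqrt 2" "0 < c1"
      "z 0 \<in> H" "0 < rho" "0 < eta"
    and init: "c 1 = c1" "khat 0 = 0"
    \<comment> \<open>iterations 1..N of NL-IAPIAL are carried out up to (at least) step (3), with step (4) executed\<close>
    and iter: "\<forall>j\<in>{1..N}.
      (let Lpsi = lam * Lambda_const Lf Lg Bg0 Bg1 (c j) (p (j - 1)) + 1;
           sig = sgm / sqrt Lpsi;
           Phi = (\<lambda>u. lam * aug_lag f h g K (c j) u (p (j - 1)) + (1/2) * (norm (u - z (j - 1)))\<^sup>2);
           r = v j + z (j - 1) - z j;
           GL = (\<lambda>u. grad_Ltilde gf Dg g K (c j) u (p (j - 1)));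
           Psi = (\<lambda>u. lam * (inner (GL (z j)) (u - z j) + h u) - inner r (u - z j)
                      + Lpsi / 2 * (norm (u - z j))\<^sup>2);
           w = (1 / lam) *\<^sub>R (r + Lpsi *\<^sub>R (z j - zhat j));
           phat = closest_point Kstar (p (j - 1) + c j *\<^sub>R g (zhat j));
           qhat = (1 / c j) *\<^sub>R (p (j - 1) - phat);
           what = w + GL (zhat j) - GL (z j);
           kh = khat (j - 1);
           Delta = (aug_lag f h g K (c j) (z (kh + 1)) (p (kh + 1)) - aug_lag f h g K (c j) (z j) (p j))
                   / real (j - kh - 1)
       in \<comment> \<open>step (1): inexact proximal point subproblem\<close>
          z j \<in> H \<and> 0 \<le> eps j \<and>
          (\<forall>u\<in>H. Phi u \<ge> Phi (z j) + inner (v j) (u - z j) - eps j) \<and>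
          (norm (v j))\<^sup>2 + 2 * eps j \<le> sig\<^sup>2 * (norm r)\<^sup>2 \<and>
          \<comment> \<open>step (2): zhat j is the argmin (over dom h = H) and the stopping test fails\<close>
          zhat j \<in> H \<and> (\<forall>u\<in>H. Psi (zhat j) \<le> Psi u) \<and>
          \<not> (norm what \<le> rho \<and> norm qhat \<le> eta) \<and>
          \<comment> \<open>step (3)\<close>
          p j = closest_point Kstar (p (j - 1) + c j *\<^sub>R g (z j)) \<and>
          \<comment> \<open>step (4)\<close>
          (if j > kh + 1 \<and> Delta \<le> lam * (1 - sgm\<^sup>2) * rho\<^sup>2 / (4 * (1 + 2 * sgm)\<^sup>2)
           then c (j + 1) = 2 * c j \<and> khat j = j
           else c (j + 1) = c j \<and> khat j = kh))"
  shows "(let dbar = infdist zbar (frontier H);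
              kappa0 = 2 * (Kh + Bf1) * Dh
                   + (sgm\<^sup>2 / (2 * (1 - sgm)\<^sup>2) + 2 * ((1 + sgm) / (1 - sgm))) * Dh\<^sup>2 / lam;
              C0 = max (norm (p 0)) kappa0 / (min 1 dbar * tau)
          in (\<forall>k\<in>{1..N}. min 1 dbar * tau * norm (p k) + (norm (p k))\<^sup>2 / c k
                           \<le> kappa0 + (1 / c k) * inner (p k) (p (k - 1)))
           \<and> (\<forall>k\<le>N. norm (p k) \<le> C0))"
proof -
  interpret iapial_problem K H h f gf g Dg Kh Lf Lg Bf1 Bg0 Bg1 Dh
    unfolding Bf1_def Bg0_def Bg1_def Dh_def
    by (rule iapial_problemI[OF K_cone K_closed B1_H(1,2) B4(1) B1_h B1_lip B2_U B2_diff
          B2_const(2) B2_lip B3_conv B3_diff B3_lip])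
  define dbar where "dbar = infdist zbar (frontier H)"
  define kappa0 where "kappa0 = 2 * (Kh + Bf1) * Dh
    + (sgm\<^sup>2 / (2 * (1 - sgm)\<^sup>2) + 2 * ((1 + sgm) / (1 - sgm))) * Dh\<^sup>2 / lam"
  have sgm: "0 \<le> sgm" "sgm < 1"
    using inp(3,4) order_le_less_trans[of sgm "1 / sqrt 2" 1] by (auto simp: divide_less_eq)
  have dbar: "0 < dbar" "cball zbar dbar \<subseteq> H"
    using infdist_frontier_pos[OF compact_imp_bounded[OF B1_H(1)] B4(1)]
      cball_infdist_frontier_subset[OF compact_imp_closed[OF B1_H(1)]] B4(1) interior_subset
    by (auto simp: dbar_def)
  then have ball: "cball zbar (min 1 dbar) \<subseteq> H" "0 \<le> min 1 dbar" "min 1 dbar \<le> 1"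
    by auto
  have c_pos: "\<forall>k\<in>{1..N}. 0 < c k"
    using iter init(1) inp(5)
    by (intro pos_if_doubling_or_constant) (auto simp: Let_def split: if_splits)
  have z_prev: "z (k - 1) \<in> H" if "k \<in> {1..N}" for k
  proof (cases "k = 1")
    case False
    then have "k - 1 \<in> {1..N}" using that by auto
    then show ?thesis using iter[rule_format, of "k - 1", unfolded Let_def] by blast
  qed (use inp(6) in simp)
  have part_a: "\<forall>k\<in>{1..N}. min 1 dbar * tau * norm (p k) + (norm (p k))\<^sup>2 / c k
      \<le> kappa0 + (1 / c k) * inner (p k) (p (k - 1))"
  proof
    fix k assume k: "k \<in> {1..N}"
    note it = iter[rule_format, OF k, unfolded Let_def Kstar_def]
    have pk: "p k = closest_point (dual_cone K) (p (k - 1) + c k *\<^sub>R g (z k))"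
      using it by blast
    show "min 1 dbar * tau * norm (p k) + (norm (p k))\<^sup>2 / c k
        \<le> kappa0 + (1 / c k) * inner (p k) (p (k - 1))"
      unfolding pk kappa0_def
      by (rule multiplier_recursion_step[of lam sgm "c k" "eps k" "z k" "z (k - 1)" "p (k - 1)" "v k"])
        (use it inp(1) sgm bspec[OF c_pos k] z_prev[OF k] B4(4) B4_reg[unfolded Kstar_def] ball
          in blast)+
  qed
  moreover have "\<forall>k\<le>N. norm (p k) \<le> max (norm (p 0)) kappa0 / (min 1 dbar * tau)"
    using dbar(1) B4(2,3)
    by (intro norm_le_of_multiplier_recursion[OF _ _ c_pos part_a]) (auto intro: mult_le_one)
  ultimately show ?thesis unfolding Let_def dbar_def kappa0_def by blast
qed

end
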